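(* Let $\mathcal{A}$ be a complex unital Banach algebra, let $p,q\in\mathcal{A}$ be idempotents and $m\in\mathbb{N}$. Then $$p+q-pq+\sum_{k=2}^{m}\big((pq)^{k-1}p-(pq)^k\big)$$ is Drazin invertible (respectively, g-Drazin invertible) if and only if $1-(pq)^m$ is Drazin invertible (respectively, g-Drazin invertible).
   Context: $\mathcal{A}$ is a complex unital Banach algebra with unit $1$; an idempotent is an element $e$ with $e^2=e$. An element $a$ is Drazin invertible if there exists $b\in\mathcal{A}$ with $ab=ba$, $bab=b$, and $(a(1-ab))^n=0$ for some $n\in\mathbb{N}$; g-Drazin invertible if there exists $b$ with $ab=ba$, $bab=b$, and $a(1-ab)$ quasinilpotent (spectral radius $0$). The empty sum (for $m=1$) is $0$. *)

theory Defs
  imports "HOL-Analysis.Analysis"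
begin

class complex_banach_algebra_1 = real_normed_algebra_1 + banach +
  fixes scaleC :: "complex \<Rightarrow> 'a \<Rightarrow> 'a"
  assumes scaleC_add_right: "scaleC c (x + y) = scaleC c x + scaleC c y"
    and scaleC_add_left: "scaleC (c + d) x = scaleC c x + scaleC d x"
    and scaleC_scaleC: "scaleC c (scaleC d x) = scaleC (c * d) x"
    and scaleC_one: "scaleC 1 x = x"
    and scaleC_of_real: "scaleC (complex_of_real r) x = scaleR r x"
    and norm_scaleC: "norm (scaleC c x) = cmod c * norm x"
    and scaleC_mult_left: "scaleC c x * y = scaleC c (x * y)"
    and scaleC_mult_right: "x * scaleC c y = scaleC c (x * y)"

definition idempotent :: "'a::monoid_mult \<Rightarrow> bool" where
  "idempotent e \<longleftrightarrow> e * e = e"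

definition invertible_elem :: "'a::ring_1 \<Rightarrow> bool" where
  "invertible_elem x \<longleftrightarrow> (\<exists>y. x * y = 1 \<and> y * x = 1)"

definition ba_spectrum :: "'a::complex_banach_algebra_1 \<Rightarrow> complex set" where
  "ba_spectrum a = {z. \<not> invertible_elem (a - scaleC z 1)}"

definition spectral_radius :: "'a::complex_banach_algebra_1 \<Rightarrow> real" where
  "spectral_radius a = Sup (cmod ` ba_spectrum a)"

definition quasinilpotent :: "'a::complex_banach_algebra_1 \<Rightarrow> bool" where
  "quasinilpotent a \<longleftrightarrow> spectral_radius a = 0"

definition drazin_invertible :: "'a::complex_banach_algebra_1 \<Rightarrow> bool" where
  "drazin_invertible a \<longleftrightarrow>
     (\<exists>b. a * b = b * a \<and> b * a * b = b \<and> (\<exists>n::nat. (a * (1 - a * b)) ^ n = 0))"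

definition g_drazin_invertible :: "'a::complex_banach_algebra_1 \<Rightarrow> bool" where
  "g_drazin_invertible a \<longleftrightarrow>
     (\<exists>b. a * b = b * a \<and> b * a * b = b \<and> quasinilpotent (a * (1 - a * b)))"

end

theory Submission
  imports Defs
begin

text \<open>Both notions are instances of \<open>drazin_rel P\<close>: generalised Drazin invertibility whose
  residual \<open>a (1 - a b)\<close> lies in a class \<open>P\<close> that is closed under swapping the factors of a
  product and satisfies \<open>r \<in> P \<Longrightarrow> 1 - r\<close> invertible (nilpotents, resp. elements with
  spectrum in \<open>{0}\<close>). For such \<open>P\<close>, Cline's formula transfers \<open>drazin_rel P\<close> from \<open>u v\<close> to
  \<open>v u\<close>, and an element \<open>a\<close> with \<open>a q = q\<close> for an idempotent \<open>q\<close> has the property iff its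
  corner \<open>(1 - q) a\<close> has it (and symmetrically for \<open>q a = q\<close>).

  The given sum equals \<open>a = q + S p (1 - q)\<close> with \<open>S = \<Sum>j<m. (p q)^j\<close>, so \<open>a q = q\<close> and
  \<open>(1 - q) a = ((1 - q) S p) (p (1 - q))\<close>. Swapping the factors telescopes to
  \<open>p - (p q)^m p = x p\<close> with \<open>x = 1 - (p q)^m\<close>, and \<open>(1 - p) x = 1 - p\<close>.\<close>

section \<open>Drazin invertibility relative to a residual class\<close>

definition drazin_rel :: "('a::ring_1 \<Rightarrow> bool) \<Rightarrow> 'a \<Rightarrow> bool" where
  "drazin_rel P a \<longleftrightarrow> (\<exists>b. a * b = b * a \<and> b * a * b = b \<and> P (a * (1 - a * b)))"

definition swap_closed :: "('a::monoid_mult \<Rightarrow> bool) \<Rightarrow> bool" where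
  "swap_closed P \<longleftrightarrow> (\<forall>u w. P (u * w) \<longrightarrow> P (w * u))"

definition one_minus_invertible :: "('a::ring_1 \<Rightarrow> bool) \<Rightarrow> bool" where
  "one_minus_invertible P \<longleftrightarrow> (\<forall>r. P r \<longrightarrow> invertible_elem (1 - r))"

lemma swap_closedD: "swap_closed P \<Longrightarrow> P (u * w) \<Longrightarrow> P (w * u)"
  unfolding swap_closed_def by blast

lemma one_minus_invertibleE:
  assumes "one_minus_invertible P" and "P r"
  obtains s where "s * (1 - r) = 1" and "(1 - r) * s = 1"
  using assms unfolding one_minus_invertible_def invertible_elem_def by blast

lemma drazin_rel_mult_commute:
  fixes u v :: "'a::ring_1"
  assumes sw: "swap_closed P" and uv: "drazin_rel P (u * v)"
  shows "drazin_rel P (v * u)"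
proof -
  obtain b where comm: "u * v * b = b * (u * v)" and inner: "b * (u * v) * b = b"
    and res: "P (u * v * (1 - u * v * b))"
    using uv unfolding drazin_rel_def by blast
  have bbuv: "b * b * (u * v) = b" and uvbb: "u * v * b * b = b"
    using comm inner by (metis mult.assoc)+
  \<comment> \<open>Cline's witness.\<close>
  define b' where "b' = v * b * b * u"
  have left: "v * u * b' = v * b * u"
    using uvbb unfolding b'_def by (metis mult.assoc)
  have right: "b' * (v * u) = v * b * u"
    using bbuv unfolding b'_def by (metis mult.assoc)
  have "b' * (v * u) * b' = v * (b * (u * v) * b) * b * u"
    unfolding right unfolding b'_def by (simp add: mult.assoc)
  then have inner': "b' * (v * u) * b' = b'"
    using inner unfolding b'_def by simp
  have "u * v * (1 - u * v * b) = u * (v * (1 - u * v * b))" by (simp add: mult.assoc)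
  then have "P (v * (1 - u * v * b) * u)" using res swap_closedD[OF sw] by metis
  moreover have "v * (1 - u * v * b) * u = v * u * (1 - v * u * b')"
    using left by (simp add: algebra_simps)
  ultimately show ?thesis unfolding drazin_rel_def using left right inner' by metis
qed

lemma drazin_rel_similar:
  fixes a u u' :: "'a::ring_1"
  assumes "swap_closed P" and "u' * u = 1" and "drazin_rel P a"
  shows "drazin_rel P (u * a * u')"
  using drazin_rel_mult_commute[OF assms(1), of u' "u * a"] assms(2,3)
  by (simp add: mult.assoc[symmetric])

lemma residual_fixed_eq_0:
  fixes r w :: "'a::ring_1"
  assumes "one_minus_invertible P" and "P r" and "r * w = w"
  shows "w = 0"
proof -
  obtain s where s: "s * (1 - r) = 1" using one_minus_invertibleE[OF assms(1,2)] by metis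
  have "(1 - r) * w = 0" using assms(3) by (simp add: algebra_simps)
  then have "s * (1 - r) * w = 0" by (simp add: mult.assoc)
  then show ?thesis using s by simp
qed

lemma drazin_spectral_idempotent_fixes:
  fixes a b q :: "'a::ring_1"
  assumes omi: "one_minus_invertible P"
    and comm: "a * b = b * a" and inner: "b * a * b = b" and res: "P (a * (1 - a * b))"
    and aq: "a * q = q"
  shows "a * b * q = q"
proof -
  define E where "E = a * b"
  have "E * E = E" and "E * a = a * E" unfolding E_def using comm inner by (metis mult.assoc)+
  then have "(1 - E) * (1 - E) = 1 - E" and "a * (1 - E) = (1 - E) * a"
    by (simp_all add: algebra_simps)
  then have "a * (1 - E) * ((1 - E) * q) = (1 - E) * q" using aq by (metis mult.assoc)
  then have "(1 - E) * q = 0" using residual_fixed_eq_0[OF omi res[folded E_def]] by blast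
  then show ?thesis unfolding E_def[symmetric] by (simp add: algebra_simps)
qed

lemma drazin_rel_upper_triangular_corner:
  fixes a q :: "'a::ring_1"
  assumes sw: "swap_closed P" and omi: "one_minus_invertible P"
    and qq: "q * q = q" and aq: "a * q = q" and da: "drazin_rel P a"
  shows "drazin_rel P ((1 - q) * a)"
proof -
  obtain B where comm: "a * B = B * a" and inner: "B * a * B = B" and Pres: "P (a * (1 - a * B))"
    using da unfolding drazin_rel_def by blast
  define E where "E = a * B"
  define res where "res = a * (1 - E)"
  have EB: "E * B = B" and Ba: "B * a = E"
    unfolding E_def using comm inner by (metis mult.assoc)+
  have Eq: "E * q = q"
    unfolding E_def by (rule drazin_spectral_idempotent_fixes[OF omi comm inner Pres aq])
  have Bq: "B * q = q" using Eq aq Ba by (metis mult.assoc)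
  have qq': "(1 - q) * q = 0" using qq by (simp add: algebra_simps)
  have aq': "a * (1 - q) = a - q" and Bq': "B * (1 - q) = B - q" and Eq': "E * (1 - q) = E - q"
    using aq Bq Eq by (simp_all add: algebra_simps)
  define b where "b = (1 - q) * B"
  define c where "c = (1 - q) * a"
  have cb: "c * b = (1 - q) * E"
  proof -
    have "c * b = (1 - q) * (a * (1 - q)) * B" unfolding c_def b_def by (simp add: mult.assoc)
    also have "\<dots> = (1 - q) * E - (1 - q) * q * B" unfolding aq' E_def by (simp add: algebra_simps)
    finally show ?thesis using qq' by simp
  qed
  have bc: "b * c = (1 - q) * E"
  proof -
    have "b * c = (1 - q) * (B * (1 - q)) * a" unfolding c_def b_def by (simp add: mult.assoc)
    also have "\<dots> = (1 - q) * (B * a) - (1 - q) * q * a" unfolding Bq' by (simp add: algebra_simps)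
    finally show ?thesis using qq' Ba by simp
  qed
  have bcb: "b * c * b = b"
  proof -
    have "b * c * b = (1 - q) * E * b" using bc by simp
    also have "\<dots> = (1 - q) * (E * (1 - q)) * B" unfolding b_def by (simp add: mult.assoc)
    also have "\<dots> = (1 - q) * (E * B) - (1 - q) * q * B" unfolding Eq' by (simp add: algebra_simps)
    finally show ?thesis using qq' EB unfolding b_def by simp
  qed
  have "c * (1 - c * b) = c - c * ((1 - q) * E)" using cb by (simp add: right_diff_distrib mult.assoc)
  also have "\<dots> = (1 - q) * a - (1 - q) * (a * (1 - q)) * E" unfolding c_def by (simp add: mult.assoc)
  also have "\<dots> = (1 - q) * res" unfolding aq' res_def E_def using qq' by (simp add: algebra_simps)
  finally have "c * (1 - c * b) = (1 - q) * res" .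
  moreover have "res * (1 - q) = res" unfolding res_def using Eq by (simp add: algebra_simps)
  then have "P ((1 - q) * res)" using swap_closedD[OF sw] Pres unfolding res_def E_def by metis
  ultimately show ?thesis unfolding drazin_rel_def c_def[symmetric] using cb bc bcb by metis
qed

lemma drazin_inverse_annihilates:
  fixes b c q :: "'a::ring_1"
  assumes "c * q = 0" and "q * c = 0" and "c * b = b * c" and "b * c * b = b"
  shows "b * q = 0" and "q * b = 0"
proof -
  have "b = b * b * c" and "b = c * b * b" using assms(3,4) by (metis mult.assoc)+
  then show "b * q = 0" and "q * b = 0" using assms(1,2) by (metis mult.assoc mult_zero_left mult_zero_right)+
qed

lemma drazin_rel_triangular_spectral_part:
  fixes q n c b :: "'a::ring_1"
  assumes qq: "q * q = q" and qn: "q * n = n" and nq: "n * q = 0"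
    and cq: "c * q = 0" and qc: "q * c = 0"
    and cb: "c * b = b * c" and bcb: "b * c * b = b" and res: "P (c * (1 - c * b))"
  shows "drazin_rel P (q + n * (c * b) + c)"
proof -
  have bq: "b * q = 0" and qb: "q * b = 0" using drazin_inverse_annihilates[OF cq qc cb bcb] .
  define e where "e = c * b"
  have eq: "e * q = 0" and qe: "q * e = 0" and ee: "e * e = e" and bc: "b * c = e"
    and eb: "e * b = b" and be: "b * e = b"
    unfolding e_def using bq qc cb bcb by (metis mult.assoc mult_zero_left mult_zero_right)+
  have cn: "c * (n * x) = 0" and bn: "b * (n * x) = 0" and en: "e * (n * x) = 0"
    and qnx: "q * (n * x) = n * x" for x
    using cq bq eq qn by (metis mult.assoc mult_zero_left)+
  \<comment> \<open>The block inverse of \<open>q + n e + c\<close> on the range of \<open>q + e\<close>.\<close>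
  define B where "B = q - n * b + b"
  have aB: "(q + n * e + c) * B = q + e"
    unfolding B_def
    by (simp add: algebra_simps qq qb qc nq cq cn en qnx eb eq flip: e_def)
  have Ba: "B * (q + n * e + c) = q + e"
    unfolding B_def by (simp add: algebra_simps qq qc qe bq bn bc nq qnx)
  have BaB: "B * (q + n * e + c) * B = B"
    unfolding Ba unfolding B_def by (simp add: algebra_simps qq qb qe en be eb eq qnx)
  have "(q + n * e + c) * (1 - (q + n * e + c) * B) = c * (1 - c * b)"
    unfolding aB by (simp add: algebra_simps qq qe eq qc cq ee nq flip: e_def)
  then show ?thesis unfolding drazin_rel_def e_def[symmetric] using aB Ba BaB res[folded e_def] by metis
qed

lemma triangular_similar_to_spectral_part:
  fixes q n c e s :: "'a::ring_1"
  assumes qq: "q * q = q" and qn: "q * n = n" and nq: "n * q = 0"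
    and cq: "c * q = 0" and qc: "q * c = 0"
    and eq: "e * q = 0" and ee: "e * e = e" and ec: "e * c = c * e"
    and s: "s * (1 - c * (1 - e)) = 1"
  obtains t where "(1 + t) * (1 - t) = 1" and "(1 - t) * (q + n * e + c) * (1 + t) = q + n + c"
proof -
  \<comment> \<open>\<open>\<pi>\<close> is the complementary spectral idempotent of \<open>c\<close> inside the corner \<open>1 - q\<close>;
    on its range \<open>1 - c\<close> acts as the unit \<open>1 - r\<close>, so \<open>t\<close> solves the Sylvester equation
    \<open>t (1 - c) = n \<pi>\<close>.\<close>
  define r where "r = c * (1 - e)"
  define \<pi> where "\<pi> = 1 - q - e"
  define t where "t = n * s * \<pi>"
  have \<pi>c: "\<pi> * c = r" and r\<pi>: "r * \<pi> = r"
    unfolding \<pi>_def r_def using qc cq eq ee ec by (simp_all add: algebra_simps)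
  have "\<pi> * q = 0" unfolding \<pi>_def using qq eq by (simp add: algebra_simps)
  then have qt: "q * t = t" and tq: "t * q = 0"
    unfolding t_def using qn by (metis mult.assoc mult_zero_right)+
  have tt: "t * t = 0" using qt tq by (metis mult.assoc mult_zero_left)
  have "t * (1 - c) = n * s * (\<pi> - \<pi> * c)" unfolding t_def by (simp add: algebra_simps)
  also have "\<dots> = n * (s * (1 - r)) * \<pi>" unfolding \<pi>c using r\<pi> by (simp add: algebra_simps)
  finally have sylvester: "t * (1 - c) = n * \<pi>" using s unfolding r_def by simp
  define a' where "a' = q + n * e + c"
  have et: "e * t = 0" and ct: "c * t = 0" and tne: "t * (n * e) = 0"
    using qt eq cq tq qn by (metis mult.assoc mult_zero_left)+
  have "a' * t = t" unfolding a'_def by (simp add: distrib_right qt et ct mult.assoc)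
  moreover have "t * a' = t * c" unfolding a'_def by (simp add: distrib_left tq tne)
  ultimately have "(1 - t) * a' * (1 + t) = a' + t * (1 - c)"
    using tt ct by (simp add: algebra_simps)
  also have "\<dots> = q + n + c" unfolding sylvester a'_def \<pi>_def using nq by (simp add: algebra_simps)
  finally have "(1 - t) * a' * (1 + t) = q + n + c" .
  moreover have "(1 + t) * (1 - t) = 1" using tt by (simp add: algebra_simps)
  ultimately show ?thesis using that unfolding a'_def by blast
qed

lemma drazin_rel_upper_triangular_from_corner:
  fixes a q :: "'a::ring_1"
  assumes sw: "swap_closed P" and omi: "one_minus_invertible P"
    and qq: "q * q = q" and aq: "a * q = q" and dc: "drazin_rel P ((1 - q) * a)"
  shows "drazin_rel P a"
proof -
  define c where "c = (1 - q) * a"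
  define n where "n = q * a - q"
  obtain b where cb: "c * b = b * c" and bcb: "b * c * b = b" and res: "P (c * (1 - c * b))"
    using dc unfolding drazin_rel_def c_def by blast
  have a: "a = q + n + c" unfolding c_def n_def by (simp add: algebra_simps)
  have cq: "c * q = 0" and qc: "q * c = 0" and nq: "n * q = 0" and qn: "q * n = n"
    unfolding c_def n_def using qq aq
    by (simp_all add: algebra_simps flip: mult.assoc add: mult.assoc[of q a q])
  have bq: "b * q = 0" using drazin_inverse_annihilates(1)[OF cq qc cb bcb] .
  have eq: "c * b * q = 0" and ee: "c * b * (c * b) = c * b" and ec: "c * b * c = c * (c * b)"
    using bq cb bcb by (metis mult.assoc mult_zero_right)+
  obtain s where "s * (1 - c * (1 - c * b)) = 1" using one_minus_invertibleE[OF omi res] by metis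
  then obtain t where "(1 + t) * (1 - t) = 1" and "(1 - t) * (q + n * (c * b) + c) * (1 + t) = a"
    using triangular_similar_to_spectral_part[OF qq qn nq cq qc eq ee ec] a by metis
  moreover have "drazin_rel P (q + n * (c * b) + c)"
    by (rule drazin_rel_triangular_spectral_part[where P = P, OF qq qn nq cq qc cb bcb res])
  ultimately show ?thesis using drazin_rel_similar[OF sw] by metis
qed

lemma drazin_rel_upper_triangular:
  fixes a q :: "'a::ring_1"
  assumes "swap_closed P" and "one_minus_invertible P" and "q * q = q" and "a * q = q"
  shows "drazin_rel P ((1 - q) * a) \<longleftrightarrow> drazin_rel P a"
  using drazin_rel_upper_triangular_corner[OF assms] drazin_rel_upper_triangular_from_corner[OF assms]
  by blast

section \<open>The opposite ring\<close>

typedef 'a opp = "UNIV :: 'a set" morphisms unopp opp by simp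

setup_lifting type_definition_opp

instantiation opp :: (ring_1) ring_1
begin

lift_definition zero_opp :: "'a opp" is 0 .
lift_definition one_opp :: "'a opp" is 1 .
lift_definition plus_opp :: "'a opp \<Rightarrow> 'a opp \<Rightarrow> 'a opp" is "(+)" .
lift_definition minus_opp :: "'a opp \<Rightarrow> 'a opp \<Rightarrow> 'a opp" is "(-)" .
lift_definition uminus_opp :: "'a opp \<Rightarrow> 'a opp" is uminus .
lift_definition times_opp :: "'a opp \<Rightarrow> 'a opp \<Rightarrow> 'a opp" is "\<lambda>x y. y * x" .

instance by standard (transfer; simp add: algebra_simps)+

end

lemma drazin_rel_opp_iff: "drazin_rel (\<lambda>x. P (unopp x)) (opp a) \<longleftrightarrow> drazin_rel P a"
proof -
  have "(opp a * opp b = opp b * opp a \<and> opp b * opp a * opp b = opp b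
          \<and> P (unopp (opp a * (1 - opp a * opp b))))
        \<longleftrightarrow> (a * b = b * a \<and> b * a * b = b \<and> P (a * (1 - a * b)))" for b
  proof -
    have "opp a * opp b = opp b * opp a \<longleftrightarrow> a * b = b * a"
      and "opp b * opp a * opp b = opp b \<longleftrightarrow> b * a * b = b"
      by (transfer, auto simp: mult.assoc)+
    moreover have "unopp (opp a * (1 - opp a * opp b)) = (1 - b * a) * a"
      by transfer simp
    moreover have "(1 - b * a) * a = a * (1 - a * b)" if "a * b = b * a"
    proof -
      have "b * a * a = a * a * b" using that by (metis mult.assoc)
      then show ?thesis by (simp add: algebra_simps)
    qed
    ultimately show ?thesis by metis
  qed
  moreover have "(\<exists>x. Q x) \<longleftrightarrow> (\<exists>b. Q (opp b))" for Q :: "'a opp \<Rightarrow> bool"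
    by (metis unopp_inverse)
  ultimately show ?thesis unfolding drazin_rel_def by presburger
qed

lemma drazin_rel_lower_triangular:
  fixes a q :: "'a::ring_1"
  assumes sw: "swap_closed P" and omi: "one_minus_invertible P"
    and qq: "q * q = q" and qa: "q * a = q"
  shows "drazin_rel P (a * (1 - q)) \<longleftrightarrow> drazin_rel P a"
proof -
  let ?P = "\<lambda>x. P (unopp x)"
  have sw': "swap_closed ?P"
    using sw unfolding swap_closed_def by transfer simp
  have omi': "one_minus_invertible ?P"
    using omi unfolding one_minus_invertible_def invertible_elem_def by transfer metis
  have "opp q * opp q = opp q" and "opp a * opp q = opp q"
    using qq qa by (transfer, simp)+
  then have "drazin_rel ?P ((1 - opp q) * opp a) \<longleftrightarrow> drazin_rel ?P (opp a)"
    by (rule drazin_rel_upper_triangular[OF sw' omi'])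
  moreover have "(1 - opp q) * opp a = opp (a * (1 - q))"
    by transfer simp
  ultimately have "drazin_rel ?P (opp (a * (1 - q))) \<longleftrightarrow> drazin_rel ?P (opp a)" by simp
  then show ?thesis by (simp only: drazin_rel_opp_iff)
qed

section \<open>Nilpotent and spectrally trivial residuals\<close>

definition nilpotent_elem :: "'a::ring_1 \<Rightarrow> bool" where
  "nilpotent_elem y \<longleftrightarrow> (\<exists>n. y ^ n = 0)"

lemma drazin_invertible_iff_drazin_rel: "drazin_invertible a \<longleftrightarrow> drazin_rel nilpotent_elem a"
  unfolding drazin_invertible_def drazin_rel_def nilpotent_elem_def by blast

lemma power_mult_rotate:
  fixes u w :: "'a::monoid_mult"
  shows "w * (u * w) ^ n = (w * u) ^ n * w"
  by (induction n) (simp_all add: power_Suc2 del: power_Suc flip: mult.assoc)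

lemma swap_closed_nilpotent_elem: "swap_closed (nilpotent_elem :: 'a::ring_1 \<Rightarrow> bool)"
  unfolding swap_closed_def nilpotent_elem_def
proof (intro allI impI)
  fix u w :: 'a
  assume "\<exists>n. (u * w) ^ n = 0"
  then obtain n where n: "(u * w) ^ n = 0" by blast
  have "(w * u) ^ Suc n = w * (u * w) ^ n * u"
    by (simp add: power_Suc2 power_mult_rotate del: power_Suc flip: mult.assoc)
  then show "\<exists>n. (w * u) ^ n = 0" using n by (metis mult_zero_left mult_zero_right)
qed

lemma one_minus_times_geometric_sum:
  fixes r :: "'a::ring_1"
  shows "(1 - r) * (\<Sum>i<n. r ^ i) = 1 - r ^ n"
    and "(\<Sum>i<n. r ^ i) * (1 - r) = 1 - r ^ n"
proof -
  show left: "(1 - r) * (\<Sum>i<n. r ^ i) = 1 - r ^ n"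
  proof (induction n)
    case (Suc n)
    then show ?case by (simp add: distrib_left left_diff_distrib)
  qed simp
  have "(\<Sum>i<n. r ^ i) * r = r * (\<Sum>i<n. r ^ i)"
    by (simp add: sum_distrib_left sum_distrib_right power_commutes)
  then show "(\<Sum>i<n. r ^ i) * (1 - r) = 1 - r ^ n"
    using left by (simp add: algebra_simps)
qed

lemma one_minus_invertible_nilpotent_elem:
  "one_minus_invertible (nilpotent_elem :: 'a::ring_1 \<Rightarrow> bool)"
  unfolding one_minus_invertible_def nilpotent_elem_def invertible_elem_def
proof (intro allI impI)
  fix r :: 'a
  assume "\<exists>n. r ^ n = 0"
  then obtain n where "r ^ n = 0" by blast
  then show "\<exists>y. (1 - r) * y = 1 \<and> y * (1 - r) = 1"
    using one_minus_times_geometric_sum[of r n] by auto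
qed

lemma invertible_elem_uminus: "invertible_elem (x::'a::ring_1) \<Longrightarrow> invertible_elem (- x)"
  unfolding invertible_elem_def by (metis minus_mult_minus)

lemma invertible_elem_mult:
  "invertible_elem (x::'a::ring_1) \<Longrightarrow> invertible_elem y \<Longrightarrow> invertible_elem (x * y)"
  unfolding invertible_elem_def by (metis mult.assoc mult_1_left)

lemma invertible_elem_mult_commute_minus_central:
  fixes u w l l' :: "'a::ring_1"
  assumes central: "\<And>y. l * y = y * l" "\<And>y. l' * y = y * l'" and "l' * l = 1"
    and "invertible_elem (u * w - l)"
  shows "invertible_elem (w * u - l)"
proof -
  obtain t where t1: "(u * w - l) * t = 1" and t2: "t * (u * w - l) = 1"
    using assms(4) unfolding invertible_elem_def by blast
  \<comment> \<open>Jacobson's trick: \<open>w t u - 1\<close> inverts \<open>w u - l\<close> up to the central unit \<open>l\<close>.\<close>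
  have "(w * u - l) * (w * t * u - 1) = w * ((u * w - l) * t) * u - w * u + l"
    and "(w * t * u - 1) * (w * u - l) = w * (t * (u * w - l)) * u - w * u + l"
    by (simp_all add: algebra_simps central)
  then have "(w * u - l) * (w * t * u - 1) = l" and "(w * t * u - 1) * (w * u - l) = l"
    using t1 t2 by simp_all
  then have "(w * u - l) * (l' * (w * t * u - 1)) = 1" and "(l' * (w * t * u - 1)) * (w * u - l) = 1"
    using assms(3) central(2) by (metis mult.assoc)+
  then show ?thesis unfolding invertible_elem_def by blast
qed

lemma scaleC_zero_left: "scaleC 0 (x::'a::complex_banach_algebra_1) = 0"
  using scaleC_of_real[of 0 x] by simp

lemma scaleC_one_mult: "scaleC z (1::'a::complex_banach_algebra_1) * y = scaleC z y"
  by (simp add: scaleC_mult_left)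

lemma mult_scaleC_one: "y * scaleC z (1::'a::complex_banach_algebra_1) = scaleC z y"
  by (simp add: scaleC_mult_right)

lemma scaleC_one_inverse:
  fixes z :: complex
  assumes "z \<noteq> 0"
  shows "scaleC (inverse z) (1::'a::complex_banach_algebra_1) * scaleC z 1 = 1"
    and "scaleC z (1::'a) * scaleC (inverse z) 1 = 1"
  using assms by (simp_all add: scaleC_one_mult scaleC_scaleC scaleC_one)

lemma invertible_elem_scaleC_one:
  "z \<noteq> 0 \<Longrightarrow> invertible_elem (scaleC z (1::'a::complex_banach_algebra_1))"
  unfolding invertible_elem_def using scaleC_one_inverse by blast

lemma ba_spectrum_mult_commute:
  fixes u w :: "'a::complex_banach_algebra_1"
  shows "ba_spectrum (u * w) - {0} = ba_spectrum (w * u) - {0}"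
proof -
  have central: "scaleC c 1 * y = y * scaleC c 1" for c and y :: 'a
    by (simp add: scaleC_one_mult mult_scaleC_one)
  have "invertible_elem (w * u - scaleC z 1)" if "z \<noteq> 0" "invertible_elem (u * w - scaleC z 1)"
    for u w :: 'a and z
    using invertible_elem_mult_commute_minus_central[OF central central
        scaleC_one_inverse(1)[OF that(1)] that(2)] .
  then show ?thesis unfolding ba_spectrum_def by blast
qed

lemma swap_closed_spectrum_zero:
  "swap_closed (\<lambda>y::'a::complex_banach_algebra_1. ba_spectrum y \<subseteq> {0})"
  unfolding swap_closed_def by (metis Diff_eq_empty_iff ba_spectrum_mult_commute)

lemma one_minus_invertible_spectrum_zero:
  "one_minus_invertible (\<lambda>y::'a::complex_banach_algebra_1. ba_spectrum y \<subseteq> {0})"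
  unfolding one_minus_invertible_def
proof (intro allI impI)
  fix r :: 'a
  assume "ba_spectrum r \<subseteq> {0}"
  then have "1 \<notin> ba_spectrum r" by auto
  then have "invertible_elem (r - 1)" unfolding ba_spectrum_def by (simp add: scaleC_one)
  then show "invertible_elem (1 - r)" using invertible_elem_uminus by fastforce
qed

lemma invertible_elem_one_minus_of_norm_less:
  fixes x :: "'a::{real_normed_algebra_1,banach}"
  assumes "norm x < 1"
  shows "invertible_elem (1 - x)"
proof -
  define s where "s = (\<Sum>n. x ^ n)"
  have s: "(\<lambda>n. x ^ n) sums s"
    unfolding s_def using complete_algebra_summable_geometric[OF assms] by (rule summable_sums)
  have tel: "(\<lambda>n. x ^ n - x ^ Suc n) sums 1"
    using telescope_sums'[OF LIMSEQ_power_zero[OF assms]] by simp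
  have "(\<lambda>n. (1 - x) * x ^ n) sums ((1 - x) * s)" and "(\<lambda>n. x ^ n * (1 - x)) sums (s * (1 - x))"
    using sums_mult[OF s] sums_mult2[OF s] .
  moreover have "(\<lambda>n. (1 - x) * x ^ n) = (\<lambda>n. x ^ n - x ^ Suc n)"
    and "(\<lambda>n. x ^ n * (1 - x)) = (\<lambda>n. x ^ n - x ^ Suc n)"
    by (simp_all add: algebra_simps power_commutes)
  ultimately have "(1 - x) * s = 1" and "s * (1 - x) = 1"
    using tel sums_unique2 by metis+
  then show ?thesis unfolding invertible_elem_def by blast
qed

lemma ba_spectrum_norm_bound:
  fixes r :: "'a::complex_banach_algebra_1"
  assumes "z \<in> ba_spectrum r"
  shows "cmod z \<le> norm r"
proof (rule ccontr)
  assume less: "\<not> cmod z \<le> norm r"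
  then have z: "z \<noteq> 0" by auto
  define x where "x = scaleC (inverse z) 1 * r"
  have "norm x \<le> norm (scaleC (inverse z) (1::'a)) * norm r"
    unfolding x_def by (rule norm_mult_ineq)
  also have "\<dots> = norm r / cmod z" by (simp add: norm_scaleC norm_inverse divide_inverse)
  also have "\<dots> < 1" using less z by simp
  finally have "invertible_elem (- (scaleC z 1 * (1 - x)))"
    using invertible_elem_one_minus_of_norm_less invertible_elem_scaleC_one[OF z]
    by (intro invertible_elem_uminus invertible_elem_mult)
  moreover have "scaleC z 1 * x = r"
    using scaleC_one_inverse(2)[OF z] unfolding x_def by (metis mult.assoc mult_1_left)
  then have "- (scaleC z 1 * (1 - x)) = r - scaleC z 1" by (simp add: right_diff_distrib)
  ultimately show False using assms unfolding ba_spectrum_def by simp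
qed

lemma quasinilpotent_imp_spectrum_zero:
  fixes r :: "'a::complex_banach_algebra_1"
  assumes "quasinilpotent r"
  shows "ba_spectrum r \<subseteq> {0}"
proof
  fix z assume z: "z \<in> ba_spectrum r"
  have "bdd_above (cmod ` ba_spectrum r)"
    by (rule bdd_aboveI[where M = "norm r"]) (auto intro: ba_spectrum_norm_bound)
  then have "cmod z \<le> spectral_radius r" unfolding spectral_radius_def using z by (intro cSup_upper) auto
  then show "z \<in> {0}" using assms unfolding quasinilpotent_def by simp
qed

lemma quasinilpotent_zero: "quasinilpotent (0::'a::complex_banach_algebra_1)"
proof -
  have "z \<in> ba_spectrum (0::'a) \<longleftrightarrow> z = 0" for z
  proof (cases "z = 0")
    case False
    then show ?thesis unfolding ba_spectrum_def
      using invertible_elem_uminus[OF invertible_elem_scaleC_one[OF False]] by simp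
  qed (simp add: ba_spectrum_def invertible_elem_def scaleC_zero_left)
  then have "ba_spectrum (0::'a) = {0}" by blast
  then show ?thesis unfolding quasinilpotent_def spectral_radius_def by simp
qed

text \<open>The residual class is \<open>ba_spectrum y \<subseteq> {0}\<close> rather than quasinilpotence: the
  supremum over an empty spectrum is unspecified, and nonemptiness of the spectrum is avoided by
  treating an invertible residual separately.\<close>

lemma g_drazin_invertible_iff_drazin_rel:
  fixes a :: "'a::complex_banach_algebra_1"
  shows "g_drazin_invertible a \<longleftrightarrow> drazin_rel (\<lambda>y. ba_spectrum y \<subseteq> {0}) a"
proof
  assume "g_drazin_invertible a"
  then show "drazin_rel (\<lambda>y. ba_spectrum y \<subseteq> {0}) a"
    unfolding g_drazin_invertible_def drazin_rel_def using quasinilpotent_imp_spectrum_zero by blast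
next
  assume "drazin_rel (\<lambda>y. ba_spectrum y \<subseteq> {0}) a"
  then obtain b where comm: "a * b = b * a" and inner: "b * a * b = b"
    and res: "ba_spectrum (a * (1 - a * b)) \<subseteq> {0}"
    unfolding drazin_rel_def by blast
  define r where "r = a * (1 - a * b)"
  show "g_drazin_invertible a"
  proof (cases "0 \<in> ba_spectrum r")
    case True
    then have "ba_spectrum r = {0}" using res unfolding r_def by blast
    then have "quasinilpotent r" unfolding quasinilpotent_def spectral_radius_def by simp
    then show ?thesis unfolding g_drazin_invertible_def r_def using comm inner by blast
  next
    \<comment> \<open>An invertible residual forces \<open>a b = 0\<close>, so \<open>a = r\<close> is itself invertible.\<close>
    case False
    then obtain ri where ri: "ri * r = 1"
      unfolding ba_spectrum_def invertible_elem_def by (auto simp: scaleC_zero_left)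
    have "a * b * (a * b) = a * b" using inner by (simp add: mult.assoc)
    then have "r * (a * b) = 0" unfolding r_def by (simp add: right_diff_distrib left_diff_distrib mult.assoc)
    then have "a * b = 0" using ri by (metis mult.assoc mult_1_left mult_zero_right)
    then have "invertible_elem a"
      using False unfolding r_def ba_spectrum_def by (simp add: scaleC_zero_left)
    then obtain ai where "a * ai = 1" and "ai * a = 1" unfolding invertible_elem_def by blast
    then have "a * ai = ai * a" and "ai * a * ai = ai" and "a * (1 - a * ai) = 0" by simp_all
    then show ?thesis unfolding g_drazin_invertible_def using quasinilpotent_zero by metis
  qed
qed

section \<open>Products of two idempotents\<close>

lemma sum_pq_terms_eq:
  fixes p q :: "'a::ring_1"
  shows "p + q - p * q + (\<Sum>k = 2..Suc n. (p * q) ^ (k - 1) * p - (p * q) ^ k)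
     = q + (\<Sum>j<Suc n. (p * q) ^ j) * p * (1 - q)"
proof -
  define g where "g j = (p * q) ^ j * p - (p * q) ^ Suc j" for j
  have "(\<Sum>k = 2..Suc n. (p * q) ^ (k - 1) * p - (p * q) ^ k) = (\<Sum>k = 2..Suc n. g (k - 1))"
    unfolding g_def by (intro sum.cong) auto
  also have "\<dots> = (\<Sum>i<n. g (Suc i))"
    by (induction n) (simp_all add: sum.cl_ivl_Suc)
  finally have "p + q - p * q + (\<Sum>k = 2..Suc n. (p * q) ^ (k - 1) * p - (p * q) ^ k)
      = q + (g 0 + (\<Sum>i<n. g (Suc i)))"
    by (simp add: g_def)
  also have "g 0 + (\<Sum>i<n. g (Suc i)) = (\<Sum>j<Suc n. g j)"
    by (rule sum.lessThan_Suc_shift[symmetric])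
  also have "\<dots> = (\<Sum>j<Suc n. (p * q) ^ j) * p * (1 - q)"
    unfolding g_def sum_distrib_right
    by (intro sum.cong) (simp_all add: right_diff_distrib power_Suc2 mult.assoc del: power_Suc)
  finally show ?thesis .
qed

lemma idempotent_sandwich_telescope:
  fixes p q :: "'a::ring_1"
  assumes pp: "p * p = p"
  shows "p * (1 - q) * (\<Sum>j<n. (p * q) ^ j) * p = p - (p * q) ^ n * p"
proof -
  have "p * ((p * q) ^ j * p) = (p * q) ^ j * p" for j
    using pp by (metis power_mult_rotate mult.assoc)
  then have "p * (1 - q) * ((p * q) ^ j * p) = (p * q) ^ j * p - (p * q) ^ Suc j * p" for j
    by (simp add: left_diff_distrib right_diff_distrib mult.assoc)
  then have "p * (1 - q) * (\<Sum>j<n. (p * q) ^ j) * p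
      = (\<Sum>j<n. (p * q) ^ j * p - (p * q) ^ Suc j * p)"
    by (simp add: sum_distrib_left sum_distrib_right mult.assoc)
  also have "\<dots> = p - (p * q) ^ n * p"
    by (subst sum_lessThan_telescope'[of "\<lambda>j. (p * q) ^ j * p"]) simp
  finally show ?thesis .
qed

lemma drazin_rel_idempotent_sum_iff:
  fixes p q :: "'a::ring_1"
  assumes sw: "swap_closed P" and omi: "one_minus_invertible P"
    and pp: "p * p = p" and qq: "q * q = q" and m: "m \<ge> 1"
  shows "drazin_rel P (p + q - p * q + (\<Sum>k = 2..m. (p * q) ^ (k - 1) * p - (p * q) ^ k))
     \<longleftrightarrow> drazin_rel P (1 - (p * q) ^ m)"
proof -
  obtain n where mn: "m = Suc n" using m by (cases m) auto
  define S where "S = (\<Sum>j<m. (p * q) ^ j)"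
  define a where "a = q + S * p * (1 - q)"
  define x where "x = 1 - (p * q) ^ m"
  have qq': "(1 - q) * q = 0" and qq'': "(1 - q) * (1 - q) = 1 - q" and pp': "(1 - p) * (1 - p) = 1 - p"
    using qq pp by (simp_all add: algebra_simps)
  have aq: "a * q = q" unfolding a_def using qq qq' by (simp add: distrib_right mult.assoc)
  have ppy: "p * (p * y) = p * y" for y using pp by (metis mult.assoc)
  have "(1 - q) * a = (1 - q) * S * p * (1 - q)"
    unfolding a_def using qq' by (simp add: distrib_left mult.assoc)
  then have uv: "(1 - q) * a = ((1 - q) * S * p) * (p * (1 - q))"
    by (simp add: mult.assoc ppy)
  have "(p * (1 - q)) * ((1 - q) * S * p) = p * (1 - q) * S * p"
    using qq'' by (metis mult.assoc)
  also have "\<dots> = x * (1 - (1 - p))"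
    unfolding S_def x_def idempotent_sandwich_telescope[OF pp] by (simp add: left_diff_distrib)
  finally have vu: "(p * (1 - q)) * ((1 - q) * S * p) = x * (1 - (1 - p))" .
  have px: "(1 - p) * x = 1 - p"
    unfolding x_def mn by (simp add: algebra_simps ppy)
  have "drazin_rel P a \<longleftrightarrow> drazin_rel P ((1 - q) * a)"
    using drazin_rel_upper_triangular[OF sw omi qq aq] by simp
  also have "\<dots> \<longleftrightarrow> drazin_rel P (x * (1 - (1 - p)))"
    unfolding uv vu[symmetric] using drazin_rel_mult_commute[OF sw] by blast
  also have "\<dots> \<longleftrightarrow> drazin_rel P x"
    by (rule drazin_rel_lower_triangular[OF sw omi pp' px])
  finally show ?thesis unfolding a_def S_def x_def mn sum_pq_terms_eq .
qed

theorem corollary3p2: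
  fixes p q :: "'a::complex_banach_algebra_1" and m :: nat
  assumes "idempotent p" and "idempotent q" and "m \<ge> 1"
  shows "(drazin_invertible
            (p + q - p * q + (\<Sum>k = 2..m. (p * q) ^ (k - 1) * p - (p * q) ^ k))
          \<longleftrightarrow> drazin_invertible (1 - (p * q) ^ m))
       \<and> (g_drazin_invertible
            (p + q - p * q + (\<Sum>k = 2..m. (p * q) ^ (k - 1) * p - (p * q) ^ k))
          \<longleftrightarrow> g_drazin_invertible (1 - (p * q) ^ m))"
  using drazin_rel_idempotent_sum_iff[OF swap_closed_nilpotent_elem one_minus_invertible_nilpotent_elem]
    drazin_rel_idempotent_sum_iff[OF swap_closed_spectrum_zero one_minus_invertible_spectrum_zero]
    assms
  unfolding idempotent_def drazin_invertible_iff_drazin_rel g_drazin_invertible_iff_drazin_rel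
  by blast

end
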